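(* Consider a balanced mass action chemical reaction network with complex stoichiometric matrix $Z$ and complex-graph incidence matrix $B$, and let $x^*\in\mathbb{R}^m_+$ be a thermodynamic equilibrium. Assume the complex graph is connected. Then for any other thermodynamic equilibrium $x^{**}$ there exists a constant $d^{**}>0$ such that $\mathcal{K}(x^{**})=d^{**}\mathcal{K}(x^* )$ and $\mathrm{Exp}\big(Z^T\mathrm{Ln}(\tfrac{x}{x^{**}})\big)=\tfrac{1}{d^{**}}\mathrm{Exp}\big(Z^T\mathrm{Ln}(\tfrac{x}{x^{*}})\big)$ for all $x\in\mathbb{R}^m_+$. Furthermore, if the complex graph is not connected and has $\ell$ connected components (linkage classes), then for any other thermodynamic equilibrium $x^{**}$ there exist constants $d_p^{**}>0$, $p=1,\dots,\ell$, such that $\mathcal{K}_p(x^{**})=d_p^{**}\mathcal{K}_p(x^* )$ for $p=1,\dots,\ell$.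
   Context: Network: $m$ species with concentrations $x\in\mathbb{R}^m_+$, $c$ complexes, $r$ reactions. $Z$ ($m\times c$) has as $\rho$-th column the species composition of complex $\rho$. The complex graph has the complexes as vertices and, for each reaction $j$, an edge from its substrate complex $\mathcal{S}_j$ to its product complex $\mathcal{P}_j$; $B$ is its $c\times r$ incidence matrix ($-1$ at tail, $+1$ at head). Connectivity is in the undirected sense; the connected components are called linkage classes. Mass action rates: $v_j(x)=k_j^{\mathrm{forw}}\exp(Z_{\mathcal{S}_j}^T\mathrm{Ln}(x))-k_j^{\mathrm{rev}}\exp(Z_{\mathcal{P}_j}^T\mathrm{Ln}(x))$ with $k_j^{\mathrm{forw}},k_j^{\mathrm{rev}}\ge0$ not both zero, and dynamics $\dot x=ZBv(x)$. A thermodynamic equilibrium is $x^*\in\mathbb{R}^m_+$ with $v(x^* )=0$; the network is balanced if one exists. For a thermodynamic equilibrium $x^*$, the balanced reaction constants are $\kappa_j(x^* ):=k_j^{\mathrm{forw}}\exp(Z_{\mathcal{S}_j}^T\mathrm{Ln}(x^* ))=k_j^{\mathrm{rev}}\exp(Z_{\mathcal{P}_j}^T\mathrm{Ln}(x^* ))>0$ and $\mathcal{K}(x^* ):=\mathrm{diag}(\kappa_1(x^* ),\dots,\kappa_r(x^* ))$. When reactions are grouped by linkage class, $\mathcal{K}_p(x^* )$ denotes the diagonal block of $\mathcal{K}(x^* )$ belonging to the reactions of the $p$-th linkage class. $\mathrm{Ln},\mathrm{Exp}$ are componentwise logarithm/exponential and $x/x^*$ is the componentwise quotient. *)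

theory Defs
  imports Main "HOL.Real" Complex_Main
begin

text \<open>Species are indexed by a finite type 's, complexes by a finite type 'c,
reactions by a finite type 'r.  Z s c is the stoichiometric coefficient of
species s in complex c.  Reaction j has substrate complex S j and product
complex P j (edge S j -> P j in the complex graph).\<close>

definition monomial :: "('s::finite \<Rightarrow> 'c \<Rightarrow> nat) \<Rightarrow> 'c \<Rightarrow> ('s \<Rightarrow> real) \<Rightarrow> real" where
  "monomial Z c x = exp (\<Sum>s\<in>UNIV. real (Z s c) * ln (x s))"

definition rate ::
  "('s::finite \<Rightarrow> 'c \<Rightarrow> nat) \<Rightarrow> ('r \<Rightarrow> 'c) \<Rightarrow> ('r \<Rightarrow> 'c) \<Rightarrow> ('r \<Rightarrow> real) \<Rightarrow> ('r \<Rightarrow> real)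
     \<Rightarrow> ('s \<Rightarrow> real) \<Rightarrow> 'r \<Rightarrow> real" where
  "rate Z S P kf kr x j = kf j * monomial Z (S j) x - kr j * monomial Z (P j) x"

definition pos_vec :: "('s \<Rightarrow> real) \<Rightarrow> bool" where
  "pos_vec x \<longleftrightarrow> (\<forall>s. x s > 0)"

definition thermo_eq ::
  "('s::finite \<Rightarrow> 'c \<Rightarrow> nat) \<Rightarrow> ('r \<Rightarrow> 'c) \<Rightarrow> ('r \<Rightarrow> 'c) \<Rightarrow> ('r \<Rightarrow> real) \<Rightarrow> ('r \<Rightarrow> real)
     \<Rightarrow> ('s \<Rightarrow> real) \<Rightarrow> bool" where
  "thermo_eq Z S P kf kr x \<longleftrightarrow> pos_vec x \<and> (\<forall>j. rate Z S P kf kr x j = 0)"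

definition kappa ::
  "('s::finite \<Rightarrow> 'c \<Rightarrow> nat) \<Rightarrow> ('r \<Rightarrow> 'c) \<Rightarrow> ('r \<Rightarrow> real) \<Rightarrow> ('s \<Rightarrow> real) \<Rightarrow> 'r \<Rightarrow> real" where
  "kappa Z S kf x j = kf j * monomial Z (S j) x"

definition cg_edges :: "('r \<Rightarrow> 'c) \<Rightarrow> ('r \<Rightarrow> 'c) \<Rightarrow> ('c \<times> 'c) set" where
  "cg_edges S P = {(S j, P j) | j. True} \<union> {(P j, S j) | j. True}"

definition linked :: "('r \<Rightarrow> 'c) \<Rightarrow> ('r \<Rightarrow> 'c) \<Rightarrow> ('c \<times> 'c) set" where
  "linked S P = (cg_edges S P)\<^sup>*"

definition cg_connected :: "('r \<Rightarrow> 'c) \<Rightarrow> ('r \<Rightarrow> 'c) \<Rightarrow> bool" where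
  "cg_connected S P \<longleftrightarrow> (\<forall>c1 c2. (c1, c2) \<in> linked S P)"

definition linkage_classes :: "('r \<Rightarrow> 'c) \<Rightarrow> ('r \<Rightarrow> 'c) \<Rightarrow> 'c set set" where
  "linkage_classes S P = UNIV // linked S P"

end

theory Submission
  imports Defs
begin

text \<open>At a thermodynamic equilibrium every balanced constant is both \<open>k\<^sup>f\<^sub>j\<close> times
the substrate monomial and \<open>k\<^sup>r\<^sub>j\<close> times the product monomial.  Hence for two
equilibria \<open>x*, x**\<close> the ratio of monomials
\<open>\<rho>(c) = exp(Z\<^sub>c\<^sup>T Ln x**) / exp(Z\<^sub>c\<^sup>T Ln x*)\<close> takes the same value at both ends of
every reaction, so it is constant on each linkage class, while
\<open>\<kappa>\<^sub>j(x**) = \<rho>(S\<^sub>j) \<kappa>\<^sub>j(x*)\<close> for every reaction \<open>j\<close>.\<close>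

lemma monomial_pos [simp]: "monomial Z c x > 0"
  by (simp add: monomial_def)

lemma monomial_nonzero [simp]: "monomial Z c x \<noteq> 0"
  by (simp add: monomial_def)

lemma exp_sum_ln_div_eq_monomial_div:
  fixes Z :: "'s::finite \<Rightarrow> 'c \<Rightarrow> nat"
  assumes "pos_vec x" and "pos_vec y"
  shows "exp (\<Sum>s\<in>UNIV. real (Z s c) * ln (x s / y s)) = monomial Z c x / monomial Z c y"
proof -
  have "ln (x s / y s) = ln (x s) - ln (y s)" for s
  proof -
    have "x s > 0" and "y s > 0"
      using assms by (auto simp: pos_vec_def)
    then show ?thesis by (simp add: ln_div)
  qed
  then have "(\<Sum>s\<in>UNIV. real (Z s c) * ln (x s / y s)) =
        (\<Sum>s\<in>UNIV. real (Z s c) * ln (x s)) - (\<Sum>s\<in>UNIV. real (Z s c) * ln (y s))"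
    by (simp add: right_diff_distrib sum_subtractf)
  then show ?thesis
    by (simp add: monomial_def exp_diff)
qed

lemma edge_invariant_eq_if_linked:
  assumes edge: "\<forall>j. f (S j) = f (P j)" and "(a, b) \<in> linked S P"
  shows "f a = f b"
  using assms(2) unfolding linked_def
proof (induction rule: rtrancl_induct)
  case base
  then show ?case by simp
next
  case (step b c)
  then show ?case using edge by (auto simp: cg_edges_def)
qed

lemma edge_invariant_eq_on_linkage_class:
  assumes edge: "\<forall>j. f (S j) = f (P j)"
    and "L \<in> linkage_classes S P" and "a \<in> L" and "b \<in> L"
  shows "f a = f b"
proof -
  obtain c where "L = linked S P `` {c}"
    using assms(2) unfolding linkage_classes_def by (auto elim: quotientE)
  with assms(3,4) have "(c, a) \<in> linked S P" and "(c, b) \<in> linked S P"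
    by auto
  then show ?thesis
    using edge_invariant_eq_if_linked[of f S P, OF edge] by metis
qed

lemma thermo_eq_kappa_eq_reverse:
  assumes "thermo_eq Z S P kf kr x"
  shows "kappa Z S kf x j = kr j * monomial Z (P j) x"
  using assms by (simp add: thermo_eq_def rate_def kappa_def)

lemma thermo_eq_kappa_pos:
  assumes nonneg: "\<forall>j. kf j \<ge> 0 \<and> kr j \<ge> 0"
    and notboth: "\<forall>j. kf j \<noteq> 0 \<or> kr j \<noteq> 0"
    and eq: "thermo_eq Z S P kf kr x"
  shows "kappa Z S kf x j > 0"
proof (cases "kf j = 0")
  case True
  with notboth nonneg have "kr j > 0"
    by (metis order_le_less)
  then show ?thesis
    using thermo_eq_kappa_eq_reverse[OF eq] by simp
next
  case False
  with nonneg have "kf j > 0"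
    by (metis order_le_less)
  then show ?thesis
    by (simp add: kappa_def)
qed

definition monomial_ratio ::
  "('s::finite \<Rightarrow> 'c \<Rightarrow> nat) \<Rightarrow> ('s \<Rightarrow> real) \<Rightarrow> ('s \<Rightarrow> real) \<Rightarrow> 'c \<Rightarrow> real" where
  "monomial_ratio Z x y c = monomial Z c y / monomial Z c x"

lemma monomial_ratio_pos: "monomial_ratio Z x y c > 0"
  by (simp add: monomial_ratio_def)

lemma kappa_eq_monomial_ratio_times_kappa:
  "kappa Z S kf y j = monomial_ratio Z x y (S j) * kappa Z S kf x j"
  by (simp add: kappa_def monomial_ratio_def)

lemma exp_sum_ln_div_eq_monomial_ratio:
  fixes Z :: "'s::finite \<Rightarrow> 'c \<Rightarrow> nat"
  assumes "pos_vec v" and "pos_vec x" and "pos_vec y"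
  shows "exp (\<Sum>s\<in>UNIV. real (Z s c) * ln (v s / y s)) =
         1 / monomial_ratio Z x y c * exp (\<Sum>s\<in>UNIV. real (Z s c) * ln (v s / x s))"
  using assms by (simp add: exp_sum_ln_div_eq_monomial_div monomial_ratio_def)

lemma thermo_eq_monomial_ratio_edge_invariant:
  assumes nonneg: "\<forall>j. kf j \<ge> 0 \<and> kr j \<ge> 0"
    and notboth: "\<forall>j. kf j \<noteq> 0 \<or> kr j \<noteq> 0"
    and eqx: "thermo_eq Z S P kf kr x" and eqy: "thermo_eq Z S P kf kr y"
  shows "monomial_ratio Z x y (S j) = monomial_ratio Z x y (P j)"
proof -
  have "kf j \<noteq> 0" and "kr j \<noteq> 0"
    using thermo_eq_kappa_pos[OF nonneg notboth eqx, of j] thermo_eq_kappa_eq_reverse[OF eqx, of j]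
    by (auto simp: kappa_def)
  have "monomial_ratio Z x y (S j) = kappa Z S kf y j / kappa Z S kf x j"
    using \<open>kf j \<noteq> 0\<close> by (simp add: kappa_def monomial_ratio_def)
  also have "\<dots> = monomial_ratio Z x y (P j)"
    using \<open>kr j \<noteq> 0\<close>
    by (simp add: thermo_eq_kappa_eq_reverse[OF eqx] thermo_eq_kappa_eq_reverse[OF eqy]
        monomial_ratio_def)
  finally show ?thesis .
qed

lemma thermo_eq_kappa_scaled_on_linkage_classes:
  assumes nonneg: "\<forall>j. kf j \<ge> 0 \<and> kr j \<ge> 0"
    and notboth: "\<forall>j. kf j \<noteq> 0 \<or> kr j \<noteq> 0"
    and eqx: "thermo_eq Z S P kf kr x" and eqy: "thermo_eq Z S P kf kr y"
  shows "\<exists>d :: 'c set \<Rightarrow> real. \<forall>L\<in>linkage_classes S P. d L > 0 \<and>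
           (\<forall>j. S j \<in> L \<longrightarrow> kappa Z S kf y j = d L * kappa Z S kf x j)"
proof (intro exI[of _ "\<lambda>L. monomial_ratio Z x y (SOME c. c \<in> L)"] ballI conjI allI impI)
  fix L j
  assume "L \<in> linkage_classes S P" and "S j \<in> L"
  then have "monomial_ratio Z x y (SOME c. c \<in> L) = monomial_ratio Z x y (S j)"
    using edge_invariant_eq_on_linkage_class[of "monomial_ratio Z x y" S P]
      thermo_eq_monomial_ratio_edge_invariant[OF nonneg notboth eqx eqy]
    by (metis someI)
  then show "kappa Z S kf y j = monomial_ratio Z x y (SOME c. c \<in> L) * kappa Z S kf x j"
    by (simp add: kappa_eq_monomial_ratio_times_kappa[of Z S kf y j x])
qed (rule monomial_ratio_pos)

lemma thermo_eq_kappa_scaled_if_connected: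
  fixes Z :: "'s::finite \<Rightarrow> 'c \<Rightarrow> nat"
  assumes nonneg: "\<forall>j. kf j \<ge> 0 \<and> kr j \<ge> 0"
    and notboth: "\<forall>j. kf j \<noteq> 0 \<or> kr j \<noteq> 0"
    and eqx: "thermo_eq Z S P kf kr x" and eqy: "thermo_eq Z S P kf kr y"
    and connected: "cg_connected S P"
  shows "\<exists>d>0. (\<forall>j. kappa Z S kf y j = d * kappa Z S kf x j) \<and>
           (\<forall>v. pos_vec v \<longrightarrow> (\<forall>c.
              exp (\<Sum>s\<in>UNIV. real (Z s c) * ln (v s / y s)) =
              (1 / d) * exp (\<Sum>s\<in>UNIV. real (Z s c) * ln (v s / x s))))"
proof (intro exI[of _ "monomial_ratio Z x y undefined"] conjI allI impI)
  have ratio_const: "monomial_ratio Z x y c = monomial_ratio Z x y undefined" for c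
    using connected edge_invariant_eq_if_linked[of "monomial_ratio Z x y" S P]
      thermo_eq_monomial_ratio_edge_invariant[OF nonneg notboth eqx eqy]
    by (simp add: cg_connected_def)
  show "kappa Z S kf y j = monomial_ratio Z x y undefined * kappa Z S kf x j" for j
    using ratio_const[of "S j"] by (simp add: kappa_eq_monomial_ratio_times_kappa[of Z S kf y j x])
  have "pos_vec x" and "pos_vec y"
    using eqx eqy by (simp_all add: thermo_eq_def)
  then show "exp (\<Sum>s\<in>UNIV. real (Z s c) * ln (v s / y s)) =
      1 / monomial_ratio Z x y undefined * exp (\<Sum>s\<in>UNIV. real (Z s c) * ln (v s / x s))"
    if "pos_vec v" for v c
    using exp_sum_ln_div_eq_monomial_ratio[OF that, of x y Z c] ratio_const[of c] by simp
qed (rule monomial_ratio_pos)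

theorem proposition3:
  fixes Z :: "'s::finite \<Rightarrow> 'c::finite \<Rightarrow> nat"
    and S P :: "'r::finite \<Rightarrow> 'c"
    and kf kr :: "'r \<Rightarrow> real"
    and xs :: "'s \<Rightarrow> real"
  assumes nonneg: "\<forall>j. kf j \<ge> 0 \<and> kr j \<ge> 0"
    and notboth: "\<forall>j. kf j \<noteq> 0 \<or> kr j \<noteq> 0"
    and eq1: "thermo_eq Z S P kf kr xs"
  shows
    "(cg_connected S P \<longrightarrow>
       (\<forall>xss. thermo_eq Z S P kf kr xss \<longrightarrow>
          (\<exists>d>0. (\<forall>j. kappa Z S kf xss j = d * kappa Z S kf xs j) \<and>
                 (\<forall>x. pos_vec x \<longrightarrow> (\<forall>c.
                    exp (\<Sum>s\<in>UNIV. real (Z s c) * ln (x s / xss s)) =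
                    (1 / d) * exp (\<Sum>s\<in>UNIV. real (Z s c) * ln (x s / xs s)))))))
     \<and>
     (\<not> cg_connected S P \<longrightarrow>
       (\<forall>xss. thermo_eq Z S P kf kr xss \<longrightarrow>
          (\<exists>d :: 'c set \<Rightarrow> real. \<forall>L\<in>linkage_classes S P. d L > 0 \<and>
              (\<forall>j. S j \<in> L \<longrightarrow> kappa Z S kf xss j = d L * kappa Z S kf xs j))))"
  using thermo_eq_kappa_scaled_if_connected[OF nonneg notboth eq1]
    thermo_eq_kappa_scaled_on_linkage_classes[OF nonneg notboth eq1]
  by blast

end
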